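(* Let $n\ge1$, let $\Omega$ be an open subset of $\mathbb{R}^n$, and let $p\in[1,\infty)$ and $T>0$ be constants. Suppose $u\in L^p(\Omega\times(0,T))$ and $u(x,t)=\int_{\mathbb{R}^n}\Phi(x-y,t)\,d\mu(y)$ for some finite positive Borel measure $\mu$ on $\mathbb{R}^n$. Then for each compact subset $K$ of $\Omega$, $$\max_{x\in K}u(x,t)=o\big(t^{-\frac{n+2}{2p}}\big)\quad\text{as }t\to0^+.$$
   Context: $\Phi$ is the heat kernel: $\Phi(x,t)=(4\pi t)^{-n/2}e^{-|x|^2/(4t)}$ for $t>0$ and $\Phi(x,t)=0$ for $t\le0$. *)

theory Defs
  imports "HOL-Analysis.Analysis" "HOL-Library.Landau_Symbols"
begin

definition heat_kernel :: "real^'n \<Rightarrow> real \<Rightarrow> real" where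
  "heat_kernel x t = (if t > 0
     then (4 * pi * t) powr (- real CARD('n) / 2) * exp (- (norm x)\<^sup>2 / (4 * t))
     else 0)"

end

theory Submission imports Defs begin

text \<open>The heat potential \<open>v = \<Phi> * \<mu>\<close> satisfies a Harnack-type inequality
  \<open>v(x,t) \<le> A v(y,s)\<close> whenever \<open>|x - y|^2 \<le> t\<close> and \<open>2t \<le> s \<le> 3t\<close>. Averaging its \<open>p\<close>-th power
  over the cylinder \<open>B(x, sqrt t) \<times> (2t, 3t)\<close>, of measure \<open>c t^((n+2)/2)\<close>, gives
  \<open>c t^((n+2)/2) v(x,t)^p \<le> A^p \<integral>_(\<Omega> \<times> (0,3t)) v^p\<close> for \<open>x \<in> K\<close> and small \<open>t\<close>, and the right-hand side
  tends to \<open>0\<close> as \<open>t \<rightarrow> 0+\<close> because \<open>v^p\<close> is integrable on \<open>\<Omega> \<times> (0,T)\<close>.\<close>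

definition heat_potential :: "(real^'n) measure \<Rightarrow> real^'n \<Rightarrow> real \<Rightarrow> real" where
  "heat_potential \<mu> x t = (\<integral>y. heat_kernel (x - y) t \<partial>\<mu>)"

definition harnack_const :: "nat \<Rightarrow> real" where
  "harnack_const n = 3 powr (real n / 2) * exp (1/4)"

lemma harnack_const_pos: "harnack_const n > 0"
  by (simp add: harnack_const_def)

lemma heat_kernel_nonneg: "heat_kernel x t \<ge> 0"
  unfolding heat_kernel_def by auto

lemma heat_kernel_le: "t > 0 \<Longrightarrow> heat_kernel (x::real^'n) t \<le> (4 * pi * t) powr (- (real CARD('n) / 2))"
  unfolding heat_kernel_def by (auto intro!: mult_left_le)

lemma borel_measurable_heat_kernel:
  "(\<lambda>w. heat_kernel (fst w :: real^'n) (snd w)) \<in> borel_measurable borel"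
proof -
  have "(\<lambda>w. heat_kernel (fst w :: real^'n) (snd w)) \<in> borel_measurable (borel \<Otimes>\<^sub>M borel)"
    unfolding heat_kernel_def by measurable
  then show ?thesis by (simp add: borel_prod)
qed

lemma powr_neg_le_scaled:
  fixes a s t :: real
  assumes "0 < t" "t \<le> s" "s \<le> c * t" "0 \<le> a"
  shows "(4 * pi * t) powr (- a) \<le> c powr a * (4 * pi * s) powr (- a)"
proof -
  have "(4 * pi * t) powr (- a) = (4 * pi * t) powr (- a) * ((4 * pi * s) powr a * (4 * pi * s) powr (- a))"
    using assms(1,2) by (simp flip: powr_add)
  also have "\<dots> = (s / t) powr a * (4 * pi * s) powr (- a)"
    using assms(1,2) by (simp add: powr_divide powr_minus powr_mult field_simps)
  also have "\<dots> \<le> c powr a * (4 * pi * s) powr (- a)"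
    using assms by (intro mult_right_mono powr_mono2) (auto simp: field_simps)
  finally show ?thesis .
qed

text \<open>The parabolic Harnack-type comparison: moving the base point by at most \<open>sqrt t\<close> costs
  at most the factor \<open>exp (1/4)\<close> in the Gaussian, provided the time is pushed forward to
  \<open>s \<in> [2t, 3t]\<close>; the prefactor then changes by at most \<open>(s/t)^(n/2) \<le> 3^(n/2)\<close>.\<close>
lemma heat_kernel_comparison:
  fixes x y z :: "real^'n"
  assumes t: "t > 0" and s: "2 * t \<le> s" "s \<le> 3 * t" and xy: "(norm (x - y))\<^sup>2 \<le> t"
  shows "heat_kernel (x - z) t \<le> harnack_const CARD('n) * heat_kernel (y - z) s"
proof -
  define n where "n = real CARD('n)"
  have s_pos: "s > 0" using t s by linarith
  have "norm (y - z) \<le> norm (x - z) + norm (x - y)"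
    using norm_triangle_ineq[of "x - z" "y - x"] by (simp add: norm_minus_commute)
  then have "(norm (y - z))\<^sup>2 \<le> (norm (x - z) + norm (x - y))\<^sup>2"
    by (intro power_mono) auto
  also have "\<dots> \<le> 2 * (norm (x - z))\<^sup>2 + 2 * (norm (x - y))\<^sup>2"
    using zero_le_power2[of "norm (x - z) - norm (x - y)"] by (simp add: power2_diff power2_sum)
  finally have yz: "(norm (y - z))\<^sup>2 \<le> 2 * (norm (x - z))\<^sup>2 + 2 * t" using xy by linarith
  have "(norm (y - z))\<^sup>2 / (4 * s) \<le> (norm (y - z))\<^sup>2 / (8 * t)"
    using s t by (intro divide_left_mono) auto
  also have "\<dots> \<le> (2 * (norm (x - z))\<^sup>2 + 2 * t) / (8 * t)"
    using yz t by (intro divide_right_mono) auto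
  also have "\<dots> = (norm (x - z))\<^sup>2 / (4 * t) + 1/4"
    using t by (simp add: field_simps)
  finally have "exp (- (norm (x - z))\<^sup>2 / (4 * t)) \<le> exp (1/4) * exp (- (norm (y - z))\<^sup>2 / (4 * s))"
    by (simp add: exp_add[symmetric])
  moreover have "(4 * pi * t) powr (- n / 2) \<le> 3 powr (n / 2) * (4 * pi * s) powr (- n / 2)"
    using powr_neg_le_scaled[of t s 3 "n / 2"] t s unfolding n_def by simp
  ultimately have "(4 * pi * t) powr (- n / 2) * exp (- (norm (x - z))\<^sup>2 / (4 * t))
      \<le> (3 powr (n / 2) * (4 * pi * s) powr (- n / 2)) * (exp (1/4) * exp (- (norm (y - z))\<^sup>2 / (4 * s)))"
    by (intro mult_mono) auto
  then show ?thesis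
    using t s_pos unfolding heat_kernel_def harnack_const_def n_def by (simp add: ac_simps)
qed

lemma integrable_heat_kernel:
  fixes x :: "real^'n"
  assumes "finite_measure \<mu>" "sets \<mu> = sets borel" "t > 0"
  shows "integrable \<mu> (\<lambda>y. heat_kernel (x - y) (t::real) :: real)"
proof -
  interpret finite_measure \<mu> by fact
  have "(\<lambda>y. (x - y, t)) \<in> borel \<rightarrow>\<^sub>M borel"
    by (intro borel_measurable_continuous_onI continuous_intros)
  from measurable_comp[OF this borel_measurable_heat_kernel]
  have "(\<lambda>y. heat_kernel (x - y) t) \<in> borel_measurable borel"
    by (simp add: o_def)
  then have "(\<lambda>y. heat_kernel (x - y) t) \<in> borel_measurable \<mu>"
    by (simp add: measurable_cong_sets[OF assms(2) refl])
  then show ?thesis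
    by (intro integrable_const_bound[where B="(4 * pi * t) powr (- (real CARD('n) / 2))"])
       (auto intro!: AE_I2 simp: heat_kernel_nonneg heat_kernel_le assms(3))
qed

lemma heat_potential_nonneg: "heat_potential \<mu> x t \<ge> 0"
  unfolding heat_potential_def by (intro integral_nonneg_AE) (simp add: heat_kernel_nonneg)

lemma heat_potential_comparison:
  fixes x y :: "real^'n"
  assumes "finite_measure \<mu>" "sets \<mu> = sets borel"
    and "t > 0" "2 * t \<le> s" "s \<le> 3 * t" "(norm (x - y))\<^sup>2 \<le> t"
  shows "heat_potential \<mu> x t \<le> harnack_const CARD('n) * heat_potential \<mu> y s"
proof -
  have "s > 0" using assms(3,4) by linarith
  then have "heat_potential \<mu> x t \<le> (\<integral>z. harnack_const CARD('n) * heat_kernel (y - z) s \<partial>\<mu>)"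
    unfolding heat_potential_def using assms
    by (intro integral_mono integrable_heat_kernel integrable_mult_right heat_kernel_comparison) auto
  then show ?thesis unfolding heat_potential_def by simp
qed

lemma borel_measurable_heat_potential:
  assumes "sets \<mu> = sets borel" "finite_measure \<mu>"
  shows "(\<lambda>z. heat_potential \<mu> (fst z) (snd z)) \<in> borel_measurable (lborel :: ((real^'n) \<times> real) measure)"
proof -
  interpret finite_measure \<mu> by fact
  have sets_eq: "sets (lborel \<Otimes>\<^sub>M \<mu>) = sets (borel :: (((real^'n) \<times> real) \<times> (real^'n)) measure)"
    by (simp add: assms(1) borel_prod[symmetric] cong: sets_pair_measure_cong)
  have "(\<lambda>w::((real^'n) \<times> real) \<times> (real^'n). (fst (fst w) - snd w, snd (fst w)))
      \<in> borel \<rightarrow>\<^sub>M borel"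
    by (intro borel_measurable_continuous_onI continuous_intros)
  from measurable_comp[OF this borel_measurable_heat_kernel]
  have "(\<lambda>w::((real^'n) \<times> real) \<times> (real^'n). heat_kernel (fst (fst w) - snd w) (snd (fst w)))
      \<in> borel_measurable borel"
    by (simp add: o_def)
  then have "(\<lambda>(z, y). heat_kernel (fst z - y) (snd z)) \<in> borel_measurable (lborel \<Otimes>\<^sub>M \<mu>)"
    by (simp add: measurable_cong_sets[OF sets_eq refl] case_prod_beta')
  then show ?thesis
    unfolding heat_potential_def by (rule borel_measurable_lebesgue_integral)
qed

lemma nn_integral_initial_slab_small:
  fixes f :: "'a::euclidean_space \<times> real \<Rightarrow> ennreal"
  assumes "A \<in> sets borel" "f \<in> borel_measurable lborel" "T > 0"
    and "(\<integral>\<^sup>+ z \<in> A \<times> {0<..<T}. f z \<partial>lborel) < \<infinity>" "\<eta> > 0"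
  shows "\<exists>b>0. (\<integral>\<^sup>+ z \<in> A \<times> {0<..<b}. f z \<partial>lborel) < \<eta>"
proof -
  define S where "S k = A \<times> {0<..<T / real (Suc k)}" for k
  define h where "h k z = f z * indicator (S k) z" for k z
  have S_mono: "S k \<subseteq> S j" if "j \<le> k" for j k
  proof -
    have "T / real (Suc k) \<le> T / real (Suc j)"
      using that assms(3) by (intro divide_left_mono) auto
    then show ?thesis unfolding S_def by auto
  qed
  have h_dec: "decseq h"
  proof (intro decseq_SucI le_funI)
    show "h (Suc k) z \<le> h k z" for k z
      using S_mono[of k "Suc k"] by (auto simp: h_def indicator_def)
  qed
  have "S k \<in> sets lborel" for k
    unfolding S_def using assms(1) by (simp add: borel_Times)
  then have h_meas: "h k \<in> borel_measurable lborel" for k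
    unfolding h_def using assms(2) by measurable
  have h_fin: "(\<integral>\<^sup>+ z. h k z \<partial>lborel) < \<infinity>" for k
  proof -
    have "(\<integral>\<^sup>+ z. h k z \<partial>lborel) \<le> (\<integral>\<^sup>+ z. h 0 z \<partial>lborel)"
      using h_dec[THEN decseqD, of 0 k] by (intro nn_integral_mono) (auto simp: le_fun_def)
    then show ?thesis using assms(4) by (simp add: h_def S_def)
  qed
  have "(INF k. h k z) = 0" for z
  proof (cases "snd z > 0")
    case True
    then obtain k :: nat where "T / snd z < real k" using reals_Archimedean2 by blast
    then have "T / real (Suc k) < snd z" using True by (simp add: field_simps)
    then have "h k z = 0" by (auto simp: h_def S_def mem_Times_iff)
    then show ?thesis by (metis INF_lower UNIV_I antisym zero_le)
  next
    case False
    then have "h 0 z = 0" by (auto simp: h_def S_def mem_Times_iff)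
    then show ?thesis by (metis INF_lower UNIV_I antisym zero_le)
  qed
  then have "(INF k. (\<integral>\<^sup>+ z. h k z \<partial>lborel)) < \<eta>"
    using nn_integral_monotone_convergence_INF_decseq[OF h_dec h_meas h_fin] assms(5) by simp
  then obtain k where "(\<integral>\<^sup>+ z. h k z \<partial>lborel) < \<eta>"
    by (auto simp: INF_less_iff)
  then show ?thesis
    using assms(3) by (intro exI[of _ "T / real (Suc k)"]) (simp add: h_def S_def)
qed

lemma emeasure_ball_Times_interval:
  fixes x :: "'a::euclidean_space"
  assumes "0 \<le> r" "a \<le> b"
  shows "emeasure lborel (ball x r \<times> {a<..<b}) = ennreal (unit_ball_vol DIM('a) * r ^ DIM('a) * (b - a))"
proof -
  have "emeasure lborel (ball x r \<times> {a<..<b}) = emeasure lborel (ball x r) * emeasure lborel {a<..<b}"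
    unfolding lborel_prod[symmetric] by (rule lborel.emeasure_pair_measure_Times) auto
  then show ?thesis
    using assms by (simp add: emeasure_ball ennreal_mult)
qed

lemma heat_potential_powr_le_slab_integral:
  fixes x :: "real^'n"
  assumes "finite_measure \<mu>" "sets \<mu> = sets borel"
    and "p > 0" "t > 0" "3 * t \<le> b" "ball x (sqrt t) \<subseteq> \<Omega>"
  shows "ennreal ((heat_potential \<mu> x t / harnack_const CARD('n)) powr p
            * (unit_ball_vol CARD('n) * t powr ((real CARD('n) + 2) / 2)))
    \<le> (\<integral>\<^sup>+ z \<in> \<Omega> \<times> {0<..<b}. ennreal (heat_potential \<mu> (fst z) (snd z) powr p) \<partial>lborel)"
proof -
  define a where "a = heat_potential \<mu> x t / harnack_const CARD('n)"
  define Q where "Q = ball x (sqrt t) \<times> {2 * t<..<3 * t}"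
  have "sqrt t ^ CARD('n) = t powr (real CARD('n) / 2)"
    using assms(4) by (simp add: powr_half_sqrt[symmetric] powr_realpow[symmetric] powr_powr)
  then have "unit_ball_vol CARD('n) * sqrt t ^ CARD('n) * (3 * t - 2 * t)
      = unit_ball_vol CARD('n) * t powr ((real CARD('n) + 2) / 2)"
    using assms(4) by (simp add: add_divide_distrib powr_add)
  then have measure_Q: "emeasure lborel Q = ennreal (unit_ball_vol CARD('n) * t powr ((real CARD('n) + 2) / 2))"
    unfolding Q_def using emeasure_ball_Times_interval[of "sqrt t" "2 * t" "3 * t" x] assms(4) by simp
  have Q_sub: "Q \<subseteq> \<Omega> \<times> {0<..<b}"
    using assms(4-6) unfolding Q_def by (auto simp: subset_eq)
  have a_nonneg: "0 \<le> a"
    unfolding a_def by (simp add: heat_potential_nonneg harnack_const_pos less_imp_le)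
  have a_le: "a powr p \<le> heat_potential \<mu> (fst z) (snd z) powr p" if "z \<in> Q" for z
  proof -
    have "dist x (fst z) < sqrt t" "2 * t < snd z" "snd z < 3 * t"
      using that unfolding Q_def by (auto simp: mem_Times_iff)
    then have "(norm (x - fst z))\<^sup>2 \<le> t"
      using power_mono[of "norm (x - fst z)" "sqrt t" 2] assms(4) by (simp add: dist_norm)
    then have "heat_potential \<mu> x t \<le> harnack_const CARD('n) * heat_potential \<mu> (fst z) (snd z)"
      using \<open>2 * t < snd z\<close> \<open>snd z < 3 * t\<close> assms(1,2,4) by (intro heat_potential_comparison) auto
    then have "a \<le> heat_potential \<mu> (fst z) (snd z)"
      unfolding a_def using harnack_const_pos by (simp add: divide_le_eq mult.commute)
    then show ?thesis
      using assms(3) a_nonneg by (intro powr_mono2) auto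
  qed
  have "ennreal (a powr p) * emeasure lborel Q = (\<integral>\<^sup>+ z. ennreal (a powr p) * indicator Q z \<partial>lborel)"
    unfolding Q_def by (simp add: borel_Times nn_integral_cmult_indicator)
  also have "\<dots> \<le> (\<integral>\<^sup>+ z \<in> \<Omega> \<times> {0<..<b}. ennreal (heat_potential \<mu> (fst z) (snd z) powr p) \<partial>lborel)"
    using a_le Q_sub by (intro nn_integral_mono) (auto simp: indicator_def subset_eq)
  finally show ?thesis
    unfolding measure_Q a_def by (simp add: ennreal_mult)
qed

lemma le_mult_powr_of_powr_mult_le:
  fixes a e P p :: real
  assumes "0 \<le> a" "0 \<le> e" "0 < P" "0 < p" "a powr p * P \<le> e powr p"
  shows "a \<le> e * P powr (- 1 / p)"
proof -
  have "a * P powr (1 / p) = (a powr p * P) powr (1 / p)"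
    using assms(1,3,4) by (simp add: powr_mult powr_powr)
  also have "\<dots> \<le> (e powr p) powr (1 / p)"
    using assms(1,3,4,5) by (intro powr_mono2) auto
  also have "\<dots> = e"
    using assms(2,4) by (simp add: powr_powr)
  finally show ?thesis
    using assms(3) by (simp add: powr_minus_divide divide_simps mult.commute)
qed

lemma heat_potential_le_of_slab_integral:
  fixes x :: "real^'n"
  assumes "finite_measure \<mu>" "sets \<mu> = sets borel"
    and "p > 0" "t > 0" "3 * t \<le> b" "ball x (sqrt t) \<subseteq> \<Omega>" "\<epsilon> > 0"
    and "(\<integral>\<^sup>+ z \<in> \<Omega> \<times> {0<..<b}. ennreal (heat_potential \<mu> (fst z) (snd z) powr p) \<partial>lborel)
           < ennreal (unit_ball_vol CARD('n) * (\<epsilon> / harnack_const CARD('n)) powr p)"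
  shows "heat_potential \<mu> x t \<le> \<epsilon> * t powr (- (real CARD('n) + 2) / (2 * p))"
proof -
  define A where "A = harnack_const CARD('n)"
  define P where "P = t powr ((real CARD('n) + 2) / 2)"
  have A_pos: "A > 0" and c_pos: "unit_ball_vol CARD('n) > 0" and "P > 0"
    using assms(4) by (simp_all add: A_def P_def harnack_const_pos)
  have "ennreal ((heat_potential \<mu> x t / A) powr p * (unit_ball_vol CARD('n) * P))
      < ennreal (unit_ball_vol CARD('n) * (\<epsilon> / A) powr p)"
    using heat_potential_powr_le_slab_integral[OF assms(1-6)] assms(8)
    unfolding A_def P_def by (rule le_less_trans)
  then have "unit_ball_vol CARD('n) * ((heat_potential \<mu> x t / A) powr p * P)
      < unit_ball_vol CARD('n) * (\<epsilon> / A) powr p"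
    using c_pos \<open>P > 0\<close> by (subst (asm) ennreal_less_iff) (auto simp: ac_simps)
  then have "(heat_potential \<mu> x t / A) powr p * P \<le> (\<epsilon> / A) powr p"
    using c_pos by simp
  then have "heat_potential \<mu> x t / A \<le> \<epsilon> / A * P powr (- 1 / p)"
    using assms(3,7) A_pos \<open>P > 0\<close>
    by (intro le_mult_powr_of_powr_mult_le) (auto simp: heat_potential_nonneg)
  moreover have "(real CARD('n) + 2) / 2 * (- 1 / p) = - (real CARD('n) + 2) / (2 * p)"
    using assms(3) by (simp add: field_simps)
  then have "P powr (- 1 / p) = t powr (- (real CARD('n) + 2) / (2 * p))"
    unfolding P_def by (simp only: powr_powr)
  ultimately show ?thesis
    using A_pos by (simp add: divide_le_eq)
qed

lemma abs_cSUP_le: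
  fixes f :: "'a \<Rightarrow> real"
  assumes "K \<noteq> {}" "\<And>x. x \<in> K \<Longrightarrow> 0 \<le> f x \<and> f x \<le> M"
  shows "\<bar>SUP x\<in>K. f x\<bar> \<le> M"
proof -
  obtain x0 where "x0 \<in> K" using assms(1) by blast
  moreover have "bdd_above (f ` K)"
    using assms(2) by (intro bdd_aboveI2[of _ _ M]) auto
  ultimately have "0 \<le> (SUP x\<in>K. f x)"
    using assms(2)[of x0] cSUP_upper[of x0 K f] by linarith
  moreover have "(SUP x\<in>K. f x) \<le> M"
    using assms by (intro cSUP_least) auto
  ultimately show ?thesis by simp
qed

lemma eventually_heat_potential_le:
  fixes \<Omega> K :: "(real^'n) set"
  assumes "finite_measure \<mu>" "sets \<mu> = sets borel" "open \<Omega>" "compact K" "K \<subseteq> \<Omega>"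
    and "p > 0" "T > 0" "\<epsilon> > 0"
    and "(\<integral>\<^sup>+ z \<in> \<Omega> \<times> {0<..<T}. ennreal (heat_potential \<mu> (fst z) (snd z) powr p) \<partial>lborel) < \<infinity>"
  shows "\<forall>\<^sub>F t in at_right 0. \<forall>x\<in>K. heat_potential \<mu> x t \<le> \<epsilon> * t powr (- (real CARD('n) + 2) / (2 * p))"
proof -
  have "\<exists>b>0. (\<integral>\<^sup>+ z \<in> \<Omega> \<times> {0<..<b}. ennreal (heat_potential \<mu> (fst z) (snd z) powr p) \<partial>lborel)
      < ennreal (unit_ball_vol CARD('n) * (\<epsilon> / harnack_const CARD('n)) powr p)"
    using borel_measurable_heat_potential[OF assms(2,1)] assms(3,7-9) harnack_const_pos[of "CARD('n)"]
    by (intro nn_integral_initial_slab_small) auto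
  then obtain b where "b > 0" and slab: "(\<integral>\<^sup>+ z \<in> \<Omega> \<times> {0<..<b}. ennreal (heat_potential \<mu> (fst z) (snd z) powr p) \<partial>lborel)
      < ennreal (unit_ball_vol CARD('n) * (\<epsilon> / harnack_const CARD('n)) powr p)"
    by blast
  obtain d where "d > 0" and d: "(\<Union>x\<in>K. ball x d) \<subseteq> \<Omega>"
    using compact_subset_open_imp_ball_epsilon_subset[OF assms(4,3,5)] by blast
  have "min (b / 3) (d\<^sup>2) > 0"
    using \<open>b > 0\<close> \<open>d > 0\<close> by simp
  then show ?thesis
    unfolding eventually_at_right_field
  proof (intro exI[of _ "min (b / 3) (d\<^sup>2)"] conjI allI impI ballI)
    fix t x
    assume "0 < t" "t < min (b / 3) (d\<^sup>2)" "x \<in> K"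
    then have "sqrt t < d" "3 * t \<le> b"
      using \<open>d > 0\<close> real_sqrt_less_mono[of t "d\<^sup>2"] by auto
    then have "ball x (sqrt t) \<subseteq> \<Omega>"
      using subset_ball[of "sqrt t" d x] d \<open>x \<in> K\<close> by fastforce
    then show "heat_potential \<mu> x t \<le> \<epsilon> * t powr (- (real CARD('n) + 2) / (2 * p))"
      using heat_potential_le_of_slab_integral[OF assms(1,2,6) \<open>0 < t\<close> \<open>3 * t \<le> b\<close> _ assms(8) slab]
      by blast
  qed
qed

theorem lemma2p4:
  fixes \<Omega> :: "(real^'n) set"
    and \<mu> :: "(real^'n) measure"
    and u :: "real^'n \<Rightarrow> real \<Rightarrow> real"
    and p T :: real
    and K :: "(real^'n) set"
  assumes "open \<Omega>"
    and "p \<ge> 1" and "T > 0"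
    and "sets \<mu> = sets borel" and "finite_measure \<mu>"
    and "\<And>x t. x \<in> \<Omega> \<Longrightarrow> 0 < t \<Longrightarrow> t < T \<Longrightarrow>
           u x t = (\<integral>y. heat_kernel (x - y) t \<partial>\<mu>)"
    and "(\<integral>\<^sup>+ z \<in> \<Omega> \<times> {0<..<T}. ennreal (\<bar>u (fst z) (snd z)\<bar> powr p) \<partial>lborel) < \<infinity>"
    and "compact K" and "K \<subseteq> \<Omega>" and "K \<noteq> {}"
  shows "(\<lambda>t. SUP x\<in>K. u x t) \<in> o[at_right 0](\<lambda>t. t powr (- (real CARD('n) + 2) / (2 * p)))"
proof (rule landau_o.smallI)
  fix \<epsilon> :: real
  assume "\<epsilon> > 0"
  have u_eq: "u x t = heat_potential \<mu> x t" if "x \<in> \<Omega>" "0 < t" "t < T" for x t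
    using assms(6)[OF that] by (simp add: heat_potential_def)
  have "p > 0"
    using assms(2) by simp
  have "(\<integral>\<^sup>+ z \<in> \<Omega> \<times> {0<..<T}. ennreal (heat_potential \<mu> (fst z) (snd z) powr p) \<partial>lborel) < \<infinity>"
    using assms(7) by (subst nn_integral_cong[where v="\<lambda>z. ennreal (\<bar>u (fst z) (snd z)\<bar> powr p) * indicator (\<Omega> \<times> {0<..<T}) z"])
      (auto simp: indicator_def u_eq heat_potential_nonneg mem_Times_iff)
  with eventually_heat_potential_le[OF assms(5,4,1,8,9) \<open>p > 0\<close> assms(3) \<open>\<epsilon> > 0\<close>]
  have "\<forall>\<^sub>F t in at_right 0. \<forall>x\<in>K. heat_potential \<mu> x t \<le> \<epsilon> * t powr (- (real CARD('n) + 2) / (2 * p))" .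
  moreover have "\<forall>\<^sub>F t in at_right 0. 0 < (t::real)"
    by (rule eventually_at_right_less)
  moreover have "\<forall>\<^sub>F t in at_right 0. t < T"
    using order_tendstoD(2)[OF tendsto_ident_at assms(3)] .
  ultimately show "\<forall>\<^sub>F t in at_right 0. norm (SUP x\<in>K. u x t) \<le> \<epsilon> * norm (t powr (- (real CARD('n) + 2) / (2 * p)))"
  proof eventually_elim
    case (elim t)
    then have "\<forall>x\<in>K. u x t = heat_potential \<mu> x t"
      using assms(9) u_eq by blast
    with elim have "\<bar>SUP x\<in>K. u x t\<bar> \<le> \<epsilon> * t powr (- (real CARD('n) + 2) / (2 * p))"
      by (intro abs_cSUP_le[OF assms(10)]) (simp add: heat_potential_nonneg)
    then show ?case
      by simp
  qed
qed

end
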